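(* Let $n$ be odd and let $A$ be an $n\times n$ semi-ASM. Then $A$ has a semi-ASM extension $B$ all of whose entries are nonzero.
   Context: A semi-ASM of order $n$ is an $n\times n$ matrix with entries in $\{0,1,-1\}$ all of whose row sums and column sums equal $1$. If $A$ and $B$ are semi-ASMs of order $n$ and $B$ agrees with $A$ in every position where $A$ is nonzero, then $B$ is a semi-ASM extension of $A$. *)

theory Defs
  imports Main
begin

text \<open>An n x n matrix is represented as a function nat => nat => int; only the
entries with indices i < n, j < n are relevant.\<close>

definition semi_asm :: "nat \<Rightarrow> (nat \<Rightarrow> nat \<Rightarrow> int) \<Rightarrow> bool" where
  "semi_asm n A \<longleftrightarrow>
     (\<forall>i<n. \<forall>j<n. A i j \<in> {0, 1, -1}) \<and>
     (\<forall>i<n. (\<Sum>j<n. A i j) = 1) \<and>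
     (\<forall>j<n. (\<Sum>i<n. A i j) = 1)"

definition semi_asm_extension :: "nat \<Rightarrow> (nat \<Rightarrow> nat \<Rightarrow> int) \<Rightarrow> (nat \<Rightarrow> nat \<Rightarrow> int) \<Rightarrow> bool" where
  "semi_asm_extension n A B \<longleftrightarrow>
     semi_asm n A \<and> semi_asm n B \<and> (\<forall>i<n. \<forall>j<n. A i j \<noteq> 0 \<longrightarrow> B i j = A i j)"

end

theory Submission
  imports Defs
begin

text \<open>Write Z for the 0/1 indicator of the zero entries of A. Since n is odd and every line
of A sums to 1 with entries in {0, 1, -1}, every row and column of Z contains an even number
of ones. Such a pattern carries a signing S with entries 1 or -1 on the pattern, 0 off it, and
all line sums 0; then A + S is the required extension. The signing is built by induction on the
number of ones: pick ones at (i,j), (i,k), (l,j), toggle the four corners of the rectangle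
they span, which keeps all parities and removes at least two ones, and correct the signing of
the smaller pattern by a multiple of the alternating rectangle.\<close>

definition rectangle :: "'a \<Rightarrow> 'a \<Rightarrow> 'b \<Rightarrow> 'b \<Rightarrow> 'a \<Rightarrow> 'b \<Rightarrow> int" where
  "rectangle i l j k r c = (of_bool (r = i) - of_bool (r = l)) * (of_bool (c = j) - of_bool (c = k))"

definition toggle_rectangle ::
    "'a \<Rightarrow> 'a \<Rightarrow> 'b \<Rightarrow> 'b \<Rightarrow> ('a \<Rightarrow> 'b \<Rightarrow> int) \<Rightarrow> 'a \<Rightarrow> 'b \<Rightarrow> int" where
  "toggle_rectangle i l j k Z r c = (if (r = i \<or> r = l) \<and> (c = j \<or> c = k) then 1 - Z r c else Z r c)"

definition even_pattern :: "'a set \<Rightarrow> 'b set \<Rightarrow> ('a \<Rightarrow> 'b \<Rightarrow> int) \<Rightarrow> bool" where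
  "even_pattern R C Z \<longleftrightarrow>
     (\<forall>r\<in>R. \<forall>c\<in>C. Z r c \<in> {0, 1}) \<and>
     (\<forall>r\<in>R. even (\<Sum>c\<in>C. Z r c)) \<and> (\<forall>c\<in>C. even (\<Sum>r\<in>R. Z r c))"

definition balanced_signing :: "'a set \<Rightarrow> 'b set \<Rightarrow> ('a \<Rightarrow> 'b \<Rightarrow> int) \<Rightarrow> ('a \<Rightarrow> 'b \<Rightarrow> int) \<Rightarrow> bool" where
  "balanced_signing R C Z S \<longleftrightarrow>
     (\<forall>r\<in>R. \<forall>c\<in>C. (Z r c = 0 \<longrightarrow> S r c = 0) \<and> (Z r c = 1 \<longrightarrow> S r c \<in> {1, -1})) \<and>
     (\<forall>r\<in>R. (\<Sum>c\<in>C. S r c) = 0) \<and> (\<forall>c\<in>C. (\<Sum>r\<in>R. S r c) = 0)"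

lemma sum_rectangle_row:
  assumes "finite C" "j \<in> C" "k \<in> C"
  shows "(\<Sum>c\<in>C. rectangle i l j k r c) = 0"
  using assms by (simp add: rectangle_def of_bool_def sum.delta sum_subtractf flip: sum_distrib_left)

lemma sum_rectangle_col:
  assumes "finite R" "i \<in> R" "l \<in> R"
  shows "(\<Sum>r\<in>R. rectangle i l j k r c) = 0"
  using assms by (simp add: rectangle_def of_bool_def sum.delta sum_subtractf flip: sum_distrib_right)

lemma sum_toggle_pair:
  fixes z :: "'a \<Rightarrow> int"
  assumes "finite J" "j \<in> J" "k \<in> J" "j \<noteq> k"
  shows "(\<Sum>c\<in>J. if c = j \<or> c = k then 1 - z c else z c) = (\<Sum>c\<in>J. z c) + 2 - 2 * z j - 2 * z k"
proof -
  have "{j, k} \<subseteq> J" using assms by auto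
  then show ?thesis
    using assms by (simp add: sum.subset_diff[of "{j, k}" J])
qed

lemma sum_toggle_rectangle_row:
  assumes "finite C" "j \<in> C" "k \<in> C" "j \<noteq> k"
  shows "(\<Sum>c\<in>C. toggle_rectangle i l j k Z r c) =
    (\<Sum>c\<in>C. Z r c) + (if r = i \<or> r = l then 2 - 2 * Z r j - 2 * Z r k else 0)"
  using sum_toggle_pair[OF assms, of "Z r"] by (simp add: toggle_rectangle_def)

lemma sum_toggle_rectangle_col:
  assumes "finite R" "i \<in> R" "l \<in> R" "i \<noteq> l"
  shows "(\<Sum>r\<in>R. toggle_rectangle i l j k Z r c) =
    (\<Sum>r\<in>R. Z r c) + (if c = j \<or> c = k then 2 - 2 * Z i c - 2 * Z l c else 0)"
  using sum_toggle_pair[OF assms, of "\<lambda>r. Z r c"] by (simp add: toggle_rectangle_def)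

lemma sum_toggle_rectangle:
  assumes "finite R" "finite C" "i \<in> R" "l \<in> R" "i \<noteq> l" "j \<in> C" "k \<in> C" "j \<noteq> k"
  shows "(\<Sum>r\<in>R. \<Sum>c\<in>C. toggle_rectangle i l j k Z r c) =
    (\<Sum>r\<in>R. \<Sum>c\<in>C. Z r c) + 4 - 2 * (Z i j + Z i k + Z l j + Z l k)"
proof -
  have "{i, l} \<subseteq> R" using assms by auto
  then show ?thesis
    using assms by (simp add: sum_toggle_rectangle_row sum.distrib sum.subset_diff[of "{i, l}" R])
qed

lemma even_pattern_toggle_rectangle:
  assumes "finite R" "finite C" "i \<in> R" "l \<in> R" "i \<noteq> l" "j \<in> C" "k \<in> C" "j \<noteq> k"
    and "even_pattern R C Z"
  shows "even_pattern R C (toggle_rectangle i l j k Z)"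
proof -
  have "toggle_rectangle i l j k Z r c \<in> {0, 1}" if "r \<in> R" "c \<in> C" for r c
    using assms(9) that unfolding even_pattern_def toggle_rectangle_def by auto
  then show ?thesis
    using assms
    by (auto simp: even_pattern_def sum_toggle_rectangle_row sum_toggle_rectangle_col)
qed

lemma even_sum_01_obtain_other_one:
  fixes z :: "'a \<Rightarrow> int"
  assumes "finite J" "even (\<Sum>c\<in>J. z c)" "\<forall>c\<in>J. z c \<in> {0, 1}" "j \<in> J" "z j = 1"
  obtains k where "k \<in> J" "k \<noteq> j" "z k = 1"
proof -
  have "\<exists>k\<in>J - {j}. z k \<noteq> 0"
  proof (rule ccontr)
    assume "\<not> ?thesis"
    then have "(\<Sum>c\<in>J. z c) = z j"
      using assms(1,4) by (simp add: sum.remove)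
    with assms(2,5) show False by simp
  qed
  then show ?thesis using assms(3) that by fastforce
qed

lemma balanced_signing_untoggle_rectangle:
  assumes "finite R" "finite C" "i \<in> R" "l \<in> R" "i \<noteq> l" "j \<in> C" "k \<in> C" "j \<noteq> k"
    and "Z i j = 1" "Z i k = 1" "Z l j = 1" "Z l k \<in> {0, 1}"
    and "balanced_signing R C (toggle_rectangle i l j k Z) S"
  shows "balanced_signing R C Z (\<lambda>r c. S r c + (Z l k - S l k) * rectangle i l j k r c)"
proof -
  \<comment> \<open>If (l,k) lies in the pattern, S vanishes there and ?s = 1; otherwise ?s = - S l k, which
    moves the sign of S at (l,k) onto the other three corners.\<close>
  let ?s = "Z l k - S l k"
  have S_outside: "\<And>r c. r \<in> R \<Longrightarrow> c \<in> C \<Longrightarrow> \<not> ((r = i \<or> r = l) \<and> (c = j \<or> c = k)) \<Longrightarrow>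
      (Z r c = 0 \<longrightarrow> S r c = 0) \<and> (Z r c = 1 \<longrightarrow> S r c \<in> {1, -1})"
    using assms(13) by (auto simp: balanced_signing_def toggle_rectangle_def)
  have S_corners: "S i j = 0" "S i k = 0" "S l j = 0"
    using assms(3-13) by (auto simp: balanced_signing_def toggle_rectangle_def)
  have "S l k \<in> (if Z l k = 0 then {1, -1} else {0})"
    using assms(4,7,12,13) by (auto simp: balanced_signing_def toggle_rectangle_def)
  then have s: "?s \<in> {1, -1}" "S l k + ?s = Z l k"
    using assms(12) by auto
  let ?S = "\<lambda>r c. S r c + ?s * rectangle i l j k r c"
  have "(Z r c = 0 \<longrightarrow> ?S r c = 0) \<and> (Z r c = 1 \<longrightarrow> ?S r c \<in> {1, -1})"
    if rc: "r \<in> R" "c \<in> C" for r c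
  proof (cases "(r = i \<or> r = l) \<and> (c = j \<or> c = k)")
    case True
    then show ?thesis using s S_corners assms(5,8-11) by (auto simp: rectangle_def)
  next
    case False
    then show ?thesis using S_outside[OF rc] by (auto simp: rectangle_def)
  qed
  moreover have "(\<Sum>c\<in>C. ?S r c) = 0" if "r \<in> R" for r
    using that assms(2,6,7,13)
    by (simp add: balanced_signing_def sum.distrib sum_rectangle_row flip: sum_distrib_left)
  moreover have "(\<Sum>r\<in>R. ?S r c) = 0" if "c \<in> C" for c
    using that assms(1,3,4,13)
    by (simp add: balanced_signing_def sum.distrib sum_rectangle_col flip: sum_distrib_left)
  ultimately show ?thesis
    unfolding balanced_signing_def by blast
qed

theorem even_pattern_balanced_signing:
  assumes "finite R" "finite C" "even_pattern R C Z"
  shows "\<exists>S. balanced_signing R C Z S"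
  using assms(3)
proof (induction "nat (\<Sum>r\<in>R. \<Sum>c\<in>C. Z r c)" arbitrary: Z rule: less_induct)
  case less
  then have entries: "\<forall>r\<in>R. \<forall>c\<in>C. Z r c \<in> {0, 1}"
    and rows: "\<forall>r\<in>R. even (\<Sum>c\<in>C. Z r c)" and cols: "\<forall>c\<in>C. even (\<Sum>r\<in>R. Z r c)"
    by (auto simp: even_pattern_def)
  show ?case
  proof (cases "\<exists>i\<in>R. \<exists>j\<in>C. Z i j = 1")
    case False
    with entries have "balanced_signing R C Z (\<lambda>_ _. 0)"
      by (fastforce simp: balanced_signing_def)
    then show ?thesis by blast
  next
    case True
    then obtain i j where ij: "i \<in> R" "j \<in> C" "Z i j = 1" by blast
    obtain k where k: "k \<in> C" "k \<noteq> j" "Z i k = 1"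
      using even_sum_01_obtain_other_one[of C "Z i"] assms(2) rows entries ij by blast
    obtain l where l: "l \<in> R" "l \<noteq> i" "Z l j = 1"
      using even_sum_01_obtain_other_one[of R "\<lambda>r. Z r j"] assms(1) cols entries ij by blast
    let ?Z' = "toggle_rectangle i l j k Z"
    have Z': "even_pattern R C ?Z'"
      using even_pattern_toggle_rectangle assms(1,2) ij k l less.prems by metis
    have "0 \<le> (\<Sum>r\<in>R. \<Sum>c\<in>C. ?Z' r c)"
      using Z' by (force simp: even_pattern_def intro: sum_nonneg)
    moreover have "(\<Sum>r\<in>R. \<Sum>c\<in>C. ?Z' r c) \<le> (\<Sum>r\<in>R. \<Sum>c\<in>C. Z r c) - 2"
      using sum_toggle_rectangle[of R C i l j k Z] assms(1,2) ij k l entries by fastforce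
    ultimately obtain S where "balanced_signing R C ?Z' S"
      using less.hyps[OF _ Z'] by fastforce
    then show ?thesis
      using balanced_signing_untoggle_rectangle[of R C i l j k Z S] assms(1,2) ij k l entries
      by blast
  qed
qed

lemma even_count_zeros_of_odd_line:
  fixes a :: "'a \<Rightarrow> int"
  assumes "finite J" "odd (card J)" "\<forall>j\<in>J. a j \<in> {0, 1, -1}" "(\<Sum>j\<in>J. a j) = 1"
  shows "even (\<Sum>j\<in>J. of_bool (a j = 0) :: int)"
proof -
  have "{j \<in> J. odd (a j + of_bool (a j = 0))} = J"
    using assms(3) by auto
  then have "odd (\<Sum>j\<in>J. a j + of_bool (a j = 0))"
    using assms(1,2) by (simp only: even_sum_iff not_False_eq_True)
  then show ?thesis using assms(4) by (simp add: sum.distrib)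
qed

lemma semi_asm_zeros_even_pattern:
  assumes "odd n" "semi_asm n A"
  shows "even_pattern {..<n} {..<n} (\<lambda>r c. of_bool (A r c = 0))"
proof -
  have "even (\<Sum>c<n. of_bool (A r c = 0) :: int)" if "r < n" for r
    using assms that by (intro even_count_zeros_of_odd_line) (auto simp: semi_asm_def)
  moreover have "even (\<Sum>r<n. of_bool (A r c = 0) :: int)" if "c < n" for c
    using assms that by (intro even_count_zeros_of_odd_line) (auto simp: semi_asm_def)
  ultimately show ?thesis
    by (simp add: even_pattern_def del: sum_of_bool_eq)
qed

lemma semi_asm_extension_add_balanced_signing:
  assumes "semi_asm n A" "balanced_signing {..<n} {..<n} (\<lambda>r c. of_bool (A r c = 0)) S"
  shows "semi_asm_extension n A (\<lambda>r c. A r c + S r c)"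
    and "\<forall>r<n. \<forall>c<n. A r c + S r c \<noteq> 0"
proof -
  have keeps: "A r c + S r c = A r c" if "r < n" "c < n" "A r c \<noteq> 0" for r c
    using assms(2) that by (simp add: balanced_signing_def)
  have entries: "A r c + S r c \<in> {1, -1}" if "r < n" "c < n" for r c
  proof (cases "A r c = 0")
    case True
    then show ?thesis using assms(2) that by (simp add: balanced_signing_def)
  next
    case False
    then show ?thesis using keeps assms(1) that by (auto simp: semi_asm_def)
  qed
  have "(\<Sum>c<n. A r c + S r c) = 1" if "r < n" for r
    using assms that by (simp add: sum.distrib balanced_signing_def semi_asm_def)
  moreover have "(\<Sum>r<n. A r c + S r c) = 1" if "c < n" for c
    using assms that by (simp add: sum.distrib balanced_signing_def semi_asm_def)
  ultimately have "semi_asm n (\<lambda>r c. A r c + S r c)"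
    using entries by (simp add: semi_asm_def)
  then show "semi_asm_extension n A (\<lambda>r c. A r c + S r c)"
    using assms(1) keeps unfolding semi_asm_extension_def by blast
  show "\<forall>r<n. \<forall>c<n. A r c + S r c \<noteq> 0"
    using entries by fastforce
qed

theorem mainTheorem15:
  fixes n :: nat and A :: "nat \<Rightarrow> nat \<Rightarrow> int"
  assumes "odd n" and "semi_asm n A"
  shows "\<exists>B. semi_asm_extension n A B \<and> (\<forall>i<n. \<forall>j<n. B i j \<noteq> 0)"
proof -
  obtain S where "balanced_signing {..<n} {..<n} (\<lambda>r c. of_bool (A r c = 0)) S"
    using even_pattern_balanced_signing[OF finite_lessThan finite_lessThan
        semi_asm_zeros_even_pattern[OF assms]] by blast
  then show ?thesis
    using semi_asm_extension_add_balanced_signing[OF assms(2)] by blast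
qed

end
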